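(* Let $G$ be a cubic graph and let $M$ be a perfect matching cut of $G$. Let $C_1, C_2$ be two vertex-disjoint induced $4$-vertex cycles of $G$ such that there is an edge of $G$ between $V(C_1)$ and $V(C_2)$. Then $E(C_1) \cap M \neq \emptyset$ if and only if $E(C_2) \cap M \neq \emptyset$.
   Context: All graphs are finite, simple and undirected; a graph is cubic if every vertex has exactly three neighbours. A cutset of $G$ is a set $M \subseteq E(G)$ for which there is a bipartition $X \uplus Y = V(G)$ into two nonempty sets such that $M$ is exactly the set of edges with one endpoint in $X$ and one in $Y$. A perfect matching cut is a perfect matching (a set of edges covering every vertex exactly once) that is also a cutset. For a subgraph $C$, $E(C)$ and $V(C)$ denote its edge set and vertex set. *)

theory Defs
  imports Main
begin

definition simple_graph :: "'a set \<Rightarrow> 'a set set \<Rightarrow> bool" where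
  "simple_graph V E \<longleftrightarrow> finite V \<and>
     (\<forall>e\<in>E. \<exists>u v. u \<in> V \<and> v \<in> V \<and> u \<noteq> v \<and> e = {u, v})"

definition neighbours :: "'a set set \<Rightarrow> 'a \<Rightarrow> 'a set" where
  "neighbours E v = {u. {u, v} \<in> E}"

definition cubic :: "'a set \<Rightarrow> 'a set set \<Rightarrow> bool" where
  "cubic V E \<longleftrightarrow> simple_graph V E \<and> (\<forall>v\<in>V. card (neighbours E v) = 3)"

definition cut_edges :: "'a set set \<Rightarrow> 'a set \<Rightarrow> 'a set \<Rightarrow> 'a set set" where
  "cut_edges E X Y = {e \<in> E. \<exists>x\<in>X. \<exists>y\<in>Y. e = {x, y}}"

definition cutset :: "'a set \<Rightarrow> 'a set set \<Rightarrow> 'a set set \<Rightarrow> bool" where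
  "cutset V E M \<longleftrightarrow> (\<exists>X Y. X \<union> Y = V \<and> X \<inter> Y = {} \<and> X \<noteq> {} \<and> Y \<noteq> {}
       \<and> M = cut_edges E X Y)"

definition perfect_matching :: "'a set \<Rightarrow> 'a set set \<Rightarrow> 'a set set \<Rightarrow> bool" where
  "perfect_matching V E M \<longleftrightarrow> M \<subseteq> E \<and> (\<forall>v\<in>V. \<exists>!e. e \<in> M \<and> v \<in> e)"

definition perfect_matching_cut :: "'a set \<Rightarrow> 'a set set \<Rightarrow> 'a set set \<Rightarrow> bool" where
  "perfect_matching_cut V E M \<longleftrightarrow> perfect_matching V E M \<and> cutset V E M"

definition is_C4 :: "'a set \<Rightarrow> 'a set set \<Rightarrow> bool" where
  "is_C4 VC EC \<longleftrightarrow> (\<exists>a b c d. distinct [a, b, c, d] \<and> VC = {a, b, c, d}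
      \<and> EC = {{a, b}, {b, c}, {c, d}, {d, a}})"

definition induced_C4 :: "'a set \<Rightarrow> 'a set set \<Rightarrow> 'a set \<Rightarrow> 'a set set \<Rightarrow> bool" where
  "induced_C4 V E VC EC \<longleftrightarrow> VC \<subseteq> V \<and> EC = {e \<in> E. e \<subseteq> VC} \<and> is_C4 VC EC"

end

theory Submission
  imports Defs
begin

text \<open>Going around a 4-cycle the side of the cut changes an even number of times, and no two
  consecutive cycle edges can both be matching edges; so a 4-cycle that meets a perfect matching
  cut contains two opposite matching edges and all four of its vertices are matched inside it.
  Now let \<open>x \<in> V(C\<^sub>1)\<close> and \<open>y \<in> V(C\<^sub>2)\<close> be adjacent and suppose \<open>C\<^sub>1\<close> meets \<open>M\<close> but \<open>C\<^sub>2\<close> does not.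
  In the cubic graph the neighbours of \<open>y\<close> are its two cycle neighbours and \<open>x\<close>; as \<open>C\<^sub>2\<close> is
  induced and avoids \<open>M\<close>, the partner of \<open>y\<close> must be \<open>x\<close>, contradicting that \<open>x\<close> is matched
  inside \<open>C\<^sub>1\<close>.\<close>

lemma simple_graph_edgeD:
  assumes "simple_graph V E" "{u, v} \<in> E"
  shows "u \<in> V" "v \<in> V" "u \<noteq> v"
proof -
  obtain p q where "p \<in> V" "q \<in> V" "p \<noteq> q" "{u, v} = {p, q}"
    using assms unfolding simple_graph_def by blast
  then show "u \<in> V" "v \<in> V" "u \<noteq> v"
    by (auto simp: doubleton_eq_iff)
qed

lemma perfect_matchingD:
  assumes "perfect_matching V E M"
  shows "M \<subseteq> E" "v \<in> V \<Longrightarrow> \<exists>!e. e \<in> M \<and> v \<in> e"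
  using assms unfolding perfect_matching_def by simp_all

lemma perfect_matching_partner_unique:
  assumes "simple_graph V E" "perfect_matching V E M" "{v, u} \<in> M" "{v, w} \<in> M"
  shows "u = w"
proof -
  have "{v, u} \<in> E"
    using assms(3) perfect_matchingD(1)[OF assms(2)] by blast
  then have "\<exists>!e. e \<in> M \<and> v \<in> e"
    using perfect_matchingD(2)[OF assms(2)] simple_graph_edgeD(1)[OF assms(1)] by blast
  then have "{v, u} = {v, w}"
    using assms(3,4) by (metis insertI1)
  then show ?thesis
    by (auto simp: doubleton_eq_iff)
qed

lemma perfect_matching_partner_exists:
  assumes "simple_graph V E" "perfect_matching V E M" "v \<in> V"
  obtains u where "{v, u} \<in> M"
proof -
  obtain e where e: "e \<in> M" "v \<in> e"
    using perfect_matchingD(2)[OF assms(2,3)] by blast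
  moreover have "e \<in> E"
    using e(1) perfect_matchingD(1)[OF assms(2)] by blast
  then obtain p q where "e = {p, q}"
    using assms(1) unfolding simple_graph_def by blast
  ultimately consider "{v, q} \<in> M" | "{v, p} \<in> M"
    by (auto simp: insert_commute)
  then show ?thesis
    using that by cases
qed

lemma perfect_matching_cut_sides:
  assumes "simple_graph V E" "perfect_matching_cut V E M"
  obtains X where "\<And>u v. {u, v} \<in> E \<Longrightarrow> {u, v} \<in> M \<longleftrightarrow> (u \<in> X \<longleftrightarrow> v \<notin> X)"
proof -
  obtain X Y where XY: "X \<union> Y = V" "X \<inter> Y = {}" "M = cut_edges E X Y"
    using assms(2) unfolding perfect_matching_cut_def cutset_def by blast
  have "{u, v} \<in> M \<longleftrightarrow> (u \<in> X \<longleftrightarrow> v \<notin> X)" if "{u, v} \<in> E" for u v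
    using simple_graph_edgeD[OF assms(1) that] that XY
    unfolding cut_edges_def by (auto simp: doubleton_eq_iff)
  then show ?thesis
    using that by blast
qed

lemma C4_matching_cut_opposite_edges:
  assumes "distinct [a, b, c, d]"
    and cut: "\<And>u v. {u, v} \<in> {{a, b}, {b, c}, {c, d}, {d, a}} \<Longrightarrow>
      {u, v} \<in> M \<longleftrightarrow> (u \<in> X \<longleftrightarrow> v \<notin> X)"
    and matching: "\<And>v u w. {v, u} \<in> M \<Longrightarrow> {v, w} \<in> M \<Longrightarrow> u = w"
    and "{{a, b}, {b, c}, {c, d}, {d, a}} \<inter> M \<noteq> {}"
  shows "({a, b} \<in> M \<and> {c, d} \<in> M) \<or> ({b, c} \<in> M \<and> {d, a} \<in> M)"
proof -
  have "\<not> ({a, b} \<in> M \<and> {b, c} \<in> M)" "\<not> ({b, c} \<in> M \<and> {c, d} \<in> M)"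
    "\<not> ({c, d} \<in> M \<and> {d, a} \<in> M)" "\<not> ({d, a} \<in> M \<and> {a, b} \<in> M)"
    using assms(1) matching[of b a c] matching[of c b d] matching[of d c a] matching[of a d b]
    by (auto simp: insert_commute)
  moreover have "{a, b} \<in> M \<longleftrightarrow> (a \<in> X \<longleftrightarrow> b \<notin> X)" "{b, c} \<in> M \<longleftrightarrow> (b \<in> X \<longleftrightarrow> c \<notin> X)"
    "{c, d} \<in> M \<longleftrightarrow> (c \<in> X \<longleftrightarrow> d \<notin> X)" "{d, a} \<in> M \<longleftrightarrow> (d \<in> X \<longleftrightarrow> a \<notin> X)"
    using cut by simp_all
  ultimately show ?thesis
    using assms(4) by blast
qed

lemma induced_C4_cycle:
  assumes "induced_C4 V E VC EC"
  obtains a b c d where "distinct [a, b, c, d]" "VC = {a, b, c, d}"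
    "EC = {{a, b}, {b, c}, {c, d}, {d, a}}" "EC \<subseteq> E"
  using assms unfolding induced_C4_def is_C4_def by blast

lemma induced_C4_perfect_matching_cut_partner:
  assumes "simple_graph V E" "perfect_matching_cut V E M" "induced_C4 V E VC EC"
    and "EC \<inter> M \<noteq> {}" "x \<in> VC"
  obtains z where "z \<in> VC" "{x, z} \<in> M"
proof -
  obtain a b c d where abcd: "distinct [a, b, c, d]" "VC = {a, b, c, d}"
    and EC: "EC = {{a, b}, {b, c}, {c, d}, {d, a}}" "EC \<subseteq> E"
    using induced_C4_cycle[OF assms(3)] by metis
  obtain X where "\<And>u v. {u, v} \<in> E \<Longrightarrow> {u, v} \<in> M \<longleftrightarrow> (u \<in> X \<longleftrightarrow> v \<notin> X)"
    using perfect_matching_cut_sides[OF assms(1,2)] by blast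
  then have cut: "\<And>u v. {u, v} \<in> EC \<Longrightarrow> {u, v} \<in> M \<longleftrightarrow> (u \<in> X \<longleftrightarrow> v \<notin> X)"
    using EC(2) by blast
  have pm: "perfect_matching V E M"
    using assms(2) unfolding perfect_matching_cut_def by simp
  have "({a, b} \<in> M \<and> {c, d} \<in> M) \<or> ({b, c} \<in> M \<and> {d, a} \<in> M)"
    using abcd(1) cut[unfolded EC(1)] perfect_matching_partner_unique[OF assms(1) pm]
      assms(4)[unfolded EC(1)]
    by (rule C4_matching_cut_opposite_edges)
  then consider "{a, b} \<in> M" "{b, a} \<in> M" "{c, d} \<in> M" "{d, c} \<in> M"
    | "{b, c} \<in> M" "{c, b} \<in> M" "{d, a} \<in> M" "{a, d} \<in> M"
    by (auto simp: insert_commute)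
  then show ?thesis
    using that assms(5) abcd(2) by cases blast+
qed

lemma induced_C4_two_neighbours:
  assumes "induced_C4 V E VC EC" "y \<in> VC"
  obtains p q where "p \<noteq> q" "p \<in> VC" "q \<in> VC" "{y, p} \<in> E" "{y, q} \<in> E"
proof -
  obtain a b c d where abcd: "distinct [a, b, c, d]" "VC = {a, b, c, d}"
    and "{{a, b}, {b, c}, {c, d}, {d, a}} \<subseteq> E"
    using induced_C4_cycle[OF assms(1)] by metis
  then have "{a, b} \<in> E" "{b, a} \<in> E" "{b, c} \<in> E" "{c, b} \<in> E"
    "{c, d} \<in> E" "{d, c} \<in> E" "{d, a} \<in> E" "{a, d} \<in> E"
    by (auto simp: insert_commute)
  moreover from assms(2) abcd(2) consider "y = a" | "y = b" | "y = c" | "y = d"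
    by blast
  ultimately show ?thesis
    using that[of b d] that[of a c] abcd by cases auto
qed

lemma cubic_induced_C4_outside_neighbour_unique:
  assumes "cubic V E" "induced_C4 V E VC EC" "y \<in> VC"
    and "{y, x} \<in> E" "{y, w} \<in> E" "x \<notin> VC" "w \<notin> VC"
  shows "w = x"
proof (rule ccontr)
  assume "w \<noteq> x"
  obtain p q where pq: "p \<noteq> q" "p \<in> VC" "q \<in> VC" "{y, p} \<in> E" "{y, q} \<in> E"
    using induced_C4_two_neighbours[OF assms(2,3)] .
  have "y \<in> V"
    using assms(2,3) unfolding induced_C4_def by blast
  then have three: "card (neighbours E y) = 3"
    using assms(1) unfolding cubic_def by blast
  have "{p, q, x, w} \<subseteq> neighbours E y"
    using pq assms(4,5) unfolding neighbours_def by (auto simp: insert_commute)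
  moreover have "finite (neighbours E y)"
    by (rule card_ge_0_finite) (simp add: three)
  ultimately have "card {p, q, x, w} \<le> 3"
    using three card_mono by metis
  moreover have "p \<noteq> x" "p \<noteq> w" "q \<noteq> x" "q \<noteq> w"
    using pq assms(6,7) by blast+
  ultimately show False
    using \<open>p \<noteq> q\<close> \<open>w \<noteq> x\<close> by simp
qed

lemma induced_C4_perfect_matching_cut_transfer:
  assumes cubic: "cubic V E" and pmc: "perfect_matching_cut V E M"
    and C1: "induced_C4 V E VC1 EC1" and C2: "induced_C4 V E VC2 EC2"
    and "VC1 \<inter> VC2 = {}" "x \<in> VC1" "y \<in> VC2" "{x, y} \<in> E"
    and "EC1 \<inter> M \<noteq> {}"
  shows "EC2 \<inter> M \<noteq> {}"
proof
  assume C2_unmatched: "EC2 \<inter> M = {}"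
  have simple: "simple_graph V E" and pm: "perfect_matching V E M"
    using cubic pmc unfolding cubic_def perfect_matching_cut_def by blast+
  obtain z where z: "z \<in> VC1" "{x, z} \<in> M"
    using induced_C4_perfect_matching_cut_partner[OF simple pmc C1] assms(6,9) by blast
  obtain w where w: "{y, w} \<in> M"
    using perfect_matching_partner_exists[OF simple pm] simple_graph_edgeD[OF simple assms(8)]
    by blast
  have "{y, w} \<in> E"
    using w perfect_matchingD(1)[OF pm] by blast
  moreover have "w \<notin> VC2"
  proof
    assume "w \<in> VC2"
    then have "{y, w} \<in> EC2"
      using C2 assms(7) \<open>{y, w} \<in> E\<close> unfolding induced_C4_def by simp
    then show False
      using w C2_unmatched by blast
  qed
  moreover have "{y, x} \<in> E" "x \<notin> VC2"
    using assms(5,6,8) by (auto simp: insert_commute)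
  ultimately have "w = x"
    using cubic_induced_C4_outside_neighbour_unique[OF cubic C2 assms(7)] by blast
  then have "y = z"
    using perfect_matching_partner_unique[OF simple pm] w z(2) by (metis insert_commute)
  then show False
    using assms(5,7) z(1) by blast
qed

theorem corollary4:
  fixes V :: "'a set" and E M :: "'a set set"
    and VC1 VC2 :: "'a set" and EC1 EC2 :: "'a set set"
  assumes "cubic V E"
    and "perfect_matching_cut V E M"
    and "induced_C4 V E VC1 EC1"
    and "induced_C4 V E VC2 EC2"
    and "VC1 \<inter> VC2 = {}"
    and "\<exists>x\<in>VC1. \<exists>y\<in>VC2. {x, y} \<in> E"
  shows "EC1 \<inter> M \<noteq> {} \<longleftrightarrow> EC2 \<inter> M \<noteq> {}"
proof -
  obtain x y where "x \<in> VC1" "y \<in> VC2" "{x, y} \<in> E"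
    using assms(6) by blast
  moreover have "{y, x} \<in> E" "VC2 \<inter> VC1 = {}"
    using \<open>{x, y} \<in> E\<close> assms(5) by (auto simp: insert_commute)
  ultimately show ?thesis
    using induced_C4_perfect_matching_cut_transfer[OF assms(1-5)]
      induced_C4_perfect_matching_cut_transfer[OF assms(1,2,4,3)] by blast
qed

end
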